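(* Let $T:V\to\mathfrak g$ be a relative Rota-Baxter operator on a Lie-Yamaguti algebra $(\mathfrak g,[\cdot,\cdot],[\![\cdot,\cdot,\cdot]\!])$ with respect to a representation $(V;\rho,\mu)$. Define $*:\otimes^2V\to V$ and $\{\cdot,\cdot,\cdot\}:\otimes^3V\to V$ by $u*v=\rho(Tu)v$ and $\{u,v,w\}=\mu(Tv,Tw)u$ for $u,v,w\in V$. Then $(V,*,\{\cdot,\cdot,\cdot\})$ is a pre-Lie-Yamaguti algebra.
   Context: All vector spaces are over a field of characteristic $0$. A Lie-Yamaguti algebra is a vector space $\mathfrak g$ with a bilinear skew-symmetric $[\cdot,\cdot]$ and a trilinear $[\![\cdot,\cdot,\cdot]\!]$ skew-symmetric in its first two arguments such that for all $x,y,z,w,t$: (1) $[[x,y],z]+[[y,z],x]+[[z,x],y]+[\![x,y,z]\!]+[\![y,z,x]\!]+[\![z,x,y]\!]=0$; (2) $[\![[x,y],z,w]\!]+[\![[y,z],x,w]\!]+[\![[z,x],y,w]\!]=0$; (3) $[\![x,y,[z,w]]\!]=[[\![x,y,z]\!],w]+[z,[\![x,y,w]\!]]$; (4) $[\![x,y,[\![z,w,t]\!]]\!]=[\![[\![x,y,z]\!],w,t]\!]+[\![z,[\![x,y,w]\!],t]\!]+[\![z,w,[\![x,y,t]\!]]\!]$. A representation $(V;\rho,\mu)$ of $\mathfrak g$ is a linear $\rho:\mathfrak g\to\mathfrak{gl}(V)$ and bilinear $\mu:\otimes^2\mathfrak g\to\mathfrak{gl}(V)$ such that, with $D_{\rho,\mu}(x,y):=\mu(y,x)-\mu(x,y)+[\rho(x),\rho(y)]-\rho([x,y])$: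 $\mu([x,y],z)-\mu(x,z)\rho(y)+\mu(y,z)\rho(x)=0$; $\mu(x,[y,z])-\rho(y)\mu(x,z)+\rho(z)\mu(x,y)=0$; $\rho([\![x,y,z]\!])=[D_{\rho,\mu}(x,y),\rho(z)]$; $\mu(z,w)\mu(x,y)-\mu(y,w)\mu(x,z)-\mu(x,[\![y,z,w]\!])+D_{\rho,\mu}(y,z)\mu(x,w)=0$; $\mu([\![x,y,z]\!],w)+\mu(z,[\![x,y,w]\!])=[D_{\rho,\mu}(x,y),\mu(z,w)]$. A relative Rota-Baxter operator on $\mathfrak g$ with respect to $(V;\rho,\mu)$ is a linear map $T:V\to\mathfrak g$ with $[Tu,Tv]=T(\rho(Tu)v-\rho(Tv)u)$ and $[\![Tu,Tv,Tw]\!]=T(D_{\rho,\mu}(Tu,Tv)w+\mu(Tv,Tw)u-\mu(Tu,Tw)v)$ for all $u,v,w\in V$. A pre-Lie-Yamaguti algebra is a vector space $A$ with a bilinear operation $*$ and a trilinear operation $\{\cdot,\cdot,\cdot\}$ such that, writing $[x,y]_C=x*y-y*x$, $(x,y,z)=(x*y)*z-x*(y*z)$ and $\{x,y,z\}_D=\{z,y,x\}-\{z,x,y\}+(y,x,z)-(x,y,z)$, for all $x,y,z,w,t\in A$: (P1) $\{z,[x,y]_C,w\}-\{y*z,x,w\}+\{x*z,y,w\}=0$; (P2) $\{x,y,[z,w]_C\}=z*\{x,y,w\}-w*\{x,y,z\}$; (P3) $\{\{x,y,z\},w,t\}-\{\{x,y,w\},z,t\}-\{x,y,\{z,w,t\}_D\}-\{x,y,\{z,w,t\}\}+\{x,y,\{w,z,t\}\}+\{z,w,\{x,y,t\}\}_D=0$;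 (P4) $\{z,\{x,y,w\}_D,t\}+\{z,\{x,y,w\},t\}-\{z,\{y,x,w\},t\}+\{z,w,\{x,y,t\}_D\}+\{z,w,\{x,y,t\}\}-\{z,w,\{y,x,t\}\}=\{x,y,\{z,w,t\}\}_D-\{\{x,y,z\}_D,w,t\}$; (P5) $\{x,y,z\}_D*w+\{x,y,z\}*w-\{y,x,z\}*w=\{x,y,z*w\}_D-z*\{x,y,w\}_D$. *)

theory Defs
  imports Main "HOL.Vector_Spaces"
begin

text \<open>Elements of gl(V) are
  functions V \<Rightarrow> V that are linear; operator products are compositions.\<close>

definition bilin :: "('k::field \<Rightarrow> 'a::ab_group_add \<Rightarrow> 'a) \<Rightarrow> ('k \<Rightarrow> 'b::ab_group_add \<Rightarrow> 'b)
    \<Rightarrow> ('k \<Rightarrow> 'c::ab_group_add \<Rightarrow> 'c) \<Rightarrow> ('a \<Rightarrow> 'b \<Rightarrow> 'c) \<Rightarrow> bool" where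
  "bilin s1 s2 s3 f \<longleftrightarrow> (\<forall>x. Vector_Spaces.linear s2 s3 (f x)) \<and> (\<forall>y. Vector_Spaces.linear s1 s3 (\<lambda>x. f x y))"

definition trilin :: "('k::field \<Rightarrow> 'a::ab_group_add \<Rightarrow> 'a) \<Rightarrow> ('k \<Rightarrow> 'b::ab_group_add \<Rightarrow> 'b)
    \<Rightarrow> ('k \<Rightarrow> 'c::ab_group_add \<Rightarrow> 'c) \<Rightarrow> ('k \<Rightarrow> 'd::ab_group_add \<Rightarrow> 'd) \<Rightarrow> ('a \<Rightarrow> 'b \<Rightarrow> 'c \<Rightarrow> 'd) \<Rightarrow> bool" where
  "trilin s1 s2 s3 s4 f \<longleftrightarrow> (\<forall>x y. Vector_Spaces.linear s3 s4 (f x y))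
     \<and> (\<forall>x z. Vector_Spaces.linear s2 s4 (\<lambda>y. f x y z)) \<and> (\<forall>y z. Vector_Spaces.linear s1 s4 (\<lambda>x. f x y z))"

definition LieYamaguti :: "('k::field_char_0 \<Rightarrow> 'g::ab_group_add \<Rightarrow> 'g) \<Rightarrow> ('g \<Rightarrow> 'g \<Rightarrow> 'g)
    \<Rightarrow> ('g \<Rightarrow> 'g \<Rightarrow> 'g \<Rightarrow> 'g) \<Rightarrow> bool" where
  "LieYamaguti s br tr \<longleftrightarrow> vector_space s \<and> bilin s s s br \<and> trilin s s s s tr
   \<and> (\<forall>x y. br x y = - br y x)
   \<and> (\<forall>x y z. tr x y z = - tr y x z)
   \<and> (\<forall>x y z. br (br x y) z + br (br y z) x + br (br z x) y + tr x y z + tr y z x + tr z x y = 0)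
   \<and> (\<forall>x y z w. tr (br x y) z w + tr (br y z) x w + tr (br z x) y w = 0)
   \<and> (\<forall>x y z w. tr x y (br z w) = br (tr x y z) w + br z (tr x y w))
   \<and> (\<forall>x y z w t. tr x y (tr z w t) = tr (tr x y z) w t + tr z (tr x y w) t + tr z w (tr x y t))"

definition Dop :: "('g \<Rightarrow> 'g \<Rightarrow> 'g) \<Rightarrow> ('g \<Rightarrow> 'v \<Rightarrow> 'v::ab_group_add) \<Rightarrow> ('g \<Rightarrow> 'g \<Rightarrow> 'v \<Rightarrow> 'v)
    \<Rightarrow> 'g \<Rightarrow> 'g \<Rightarrow> 'v \<Rightarrow> 'v" where
  "Dop br \<rho> \<mu> x y v = \<mu> y x v - \<mu> x y v + \<rho> x (\<rho> y v) - \<rho> y (\<rho> x v) - \<rho> (br x y) v"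

definition LY_rep :: "('k::field_char_0 \<Rightarrow> 'g::ab_group_add \<Rightarrow> 'g) \<Rightarrow> ('g \<Rightarrow> 'g \<Rightarrow> 'g)
    \<Rightarrow> ('g \<Rightarrow> 'g \<Rightarrow> 'g \<Rightarrow> 'g) \<Rightarrow> ('k \<Rightarrow> 'v::ab_group_add \<Rightarrow> 'v)
    \<Rightarrow> ('g \<Rightarrow> 'v \<Rightarrow> 'v) \<Rightarrow> ('g \<Rightarrow> 'g \<Rightarrow> 'v \<Rightarrow> 'v) \<Rightarrow> bool" where
  "LY_rep s br tr sv \<rho> \<mu> \<longleftrightarrow> vector_space sv
   \<and> (\<forall>x. Vector_Spaces.linear sv sv (\<rho> x)) \<and> (\<forall>v. Vector_Spaces.linear s sv (\<lambda>x. \<rho> x v))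
   \<and> (\<forall>x y. Vector_Spaces.linear sv sv (\<mu> x y))
   \<and> (\<forall>v. bilin s s sv (\<lambda>x y. \<mu> x y v))
   \<and> (\<forall>x y z v. \<mu> (br x y) z v - \<mu> x z (\<rho> y v) + \<mu> y z (\<rho> x v) = 0)
   \<and> (\<forall>x y z v. \<mu> x (br y z) v - \<rho> y (\<mu> x z v) + \<rho> z (\<mu> x y v) = 0)
   \<and> (\<forall>x y z v. \<rho> (tr x y z) v = Dop br \<rho> \<mu> x y (\<rho> z v) - \<rho> z (Dop br \<rho> \<mu> x y v))
   \<and> (\<forall>x y z w v. \<mu> z w (\<mu> x y v) - \<mu> y w (\<mu> x z v) - \<mu> x (tr y z w) v
                    + Dop br \<rho> \<mu> y z (\<mu> x w v) = 0)
   \<and> (\<forall>x y z w v. \<mu> (tr x y z) w v + \<mu> z (tr x y w) v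
                    = Dop br \<rho> \<mu> x y (\<mu> z w v) - \<mu> z w (Dop br \<rho> \<mu> x y v))"

definition rel_RB :: "('k::field_char_0 \<Rightarrow> 'g::ab_group_add \<Rightarrow> 'g) \<Rightarrow> ('g \<Rightarrow> 'g \<Rightarrow> 'g)
    \<Rightarrow> ('g \<Rightarrow> 'g \<Rightarrow> 'g \<Rightarrow> 'g) \<Rightarrow> ('k \<Rightarrow> 'v::ab_group_add \<Rightarrow> 'v)
    \<Rightarrow> ('g \<Rightarrow> 'v \<Rightarrow> 'v) \<Rightarrow> ('g \<Rightarrow> 'g \<Rightarrow> 'v \<Rightarrow> 'v) \<Rightarrow> ('v \<Rightarrow> 'g) \<Rightarrow> bool" where
  "rel_RB s br tr sv \<rho> \<mu> T \<longleftrightarrow> Vector_Spaces.linear sv s T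
   \<and> (\<forall>u v. br (T u) (T v) = T (\<rho> (T u) v - \<rho> (T v) u))
   \<and> (\<forall>u v w. tr (T u) (T v) (T w)
        = T (Dop br \<rho> \<mu> (T u) (T v) w + \<mu> (T v) (T w) u - \<mu> (T u) (T w) v))"

definition preLY :: "('k::field_char_0 \<Rightarrow> 'a::ab_group_add \<Rightarrow> 'a) \<Rightarrow> ('a \<Rightarrow> 'a \<Rightarrow> 'a)
    \<Rightarrow> ('a \<Rightarrow> 'a \<Rightarrow> 'a \<Rightarrow> 'a) \<Rightarrow> bool" where
  "preLY s m tb \<longleftrightarrow>
   (let C = (\<lambda>x y. m x y - m y x);
        A = (\<lambda>x y z. m (m x y) z - m x (m y z));
        D = (\<lambda>x y z. tb z y x - tb z x y + A y x z - A x y z)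
    in vector_space s \<and> bilin s s s m \<and> trilin s s s s tb
     \<and> (\<forall>x y z w. tb z (C x y) w - tb (m y z) x w + tb (m x z) y w = 0)
     \<and> (\<forall>x y z w. tb x y (C z w) = m z (tb x y w) - m w (tb x y z))
     \<and> (\<forall>x y z w t. tb (tb x y z) w t - tb (tb x y w) z t - tb x y (D z w t) - tb x y (tb z w t)
                     + tb x y (tb w z t) + D z w (tb x y t) = 0)
     \<and> (\<forall>x y z w t. tb z (D x y w) t + tb z (tb x y w) t - tb z (tb y x w) t
                     + tb z w (D x y t) + tb z w (tb x y t) - tb z w (tb y x t)
                     = D x y (tb z w t) - tb (D x y z) w t)
     \<and> (\<forall>x y z w. m (D x y z) w + m (tb x y z) w - m (tb y x z) w = D x y (m z w) - m z (D x y w)))"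

end

theory Submission
  imports Defs
begin

text \<open>Each pre-Lie-Yamaguti identity is one of the representation axioms evaluated at elements
  \<open>Tu, Tv, \<dots>\<close>: the Rota-Baxter identities rewrite \<open>[Tu,Tv]\<close> as \<open>T [u,v]\<^sub>C\<close> and
  \<open>[[Tu,Tv,Tw]]\<close> as \<open>T (D(u,v,w) + {u,v,w} - {v,u,w})\<close>, and the pre-Lie-Yamaguti operator
  \<open>D(u,v,\<cdot>)\<close> coincides with \<open>D\<^sub>\<rho>\<^sub>\<mu>(Tu,Tv)\<close>.\<close>

lemma linear_map_add: "Vector_Spaces.linear s1 s2 f \<Longrightarrow> f (a + b) = f a + f b"
  by (simp add: linear_iff)

lemma linear_map_diff: "Vector_Spaces.linear s1 s2 f \<Longrightarrow> f (a - b) = f a - f b"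
  by (metis module_hom.diff module_hom_iff_linear)

lemma linear_compose_apply:
  "Vector_Spaces.linear s1 s2 f \<Longrightarrow> Vector_Spaces.linear s2 s3 g
   \<Longrightarrow> Vector_Spaces.linear s1 s3 (\<lambda>x. g (f x))"
  using Vector_Spaces.linear_compose[of s1 s2 f s3 g] by (simp add: comp_def)

definition associator :: "('a \<Rightarrow> 'a \<Rightarrow> 'a::ab_group_add) \<Rightarrow> 'a \<Rightarrow> 'a \<Rightarrow> 'a \<Rightarrow> 'a" where
  "associator m x y z = m (m x y) z - m x (m y z)"

definition preLY_D :: "('a \<Rightarrow> 'a \<Rightarrow> 'a::ab_group_add) \<Rightarrow> ('a \<Rightarrow> 'a \<Rightarrow> 'a \<Rightarrow> 'a)
    \<Rightarrow> 'a \<Rightarrow> 'a \<Rightarrow> 'a \<Rightarrow> 'a" where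
  "preLY_D m tb x y z = tb z y x - tb z x y + associator m y x z - associator m x y z"

locale LY_relative_RB =
  fixes s :: "'k::field_char_0 \<Rightarrow> 'g::ab_group_add \<Rightarrow> 'g"
    and br :: "'g \<Rightarrow> 'g \<Rightarrow> 'g" and tr :: "'g \<Rightarrow> 'g \<Rightarrow> 'g \<Rightarrow> 'g"
    and sv :: "'k \<Rightarrow> 'v::ab_group_add \<Rightarrow> 'v"
    and \<rho> :: "'g \<Rightarrow> 'v \<Rightarrow> 'v" and \<mu> :: "'g \<Rightarrow> 'g \<Rightarrow> 'v \<Rightarrow> 'v" and T :: "'v \<Rightarrow> 'g"
  assumes rep: "LY_rep s br tr sv \<rho> \<mu>"
    and RB: "rel_RB s br tr sv \<rho> \<mu> T"
begin

lemma
  shows vector_space_V: "vector_space sv"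
    and linear_T: "Vector_Spaces.linear sv s T"
    and linear_\<rho>: "Vector_Spaces.linear sv sv (\<rho> x)"
    and linear_\<rho>_left: "Vector_Spaces.linear s sv (\<lambda>x. \<rho> x v)"
    and linear_\<mu>: "Vector_Spaces.linear sv sv (\<mu> x y)"
    and linear_\<mu>_left: "Vector_Spaces.linear s sv (\<lambda>x. \<mu> x y v)"
    and linear_\<mu>_middle: "Vector_Spaces.linear s sv (\<lambda>y. \<mu> x y v)"
  using rep RB unfolding LY_rep_def rel_RB_def bilin_def by auto

lemma
  shows \<mu>_bracket_left: "\<mu> (br x y) z v - \<mu> x z (\<rho> y v) + \<mu> y z (\<rho> x v) = 0"
    and \<mu>_bracket_right: "\<mu> x (br y z) v - \<rho> y (\<mu> x z v) + \<rho> z (\<mu> x y v) = 0"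
    and \<rho>_tr: "\<rho> (tr x y z) v = Dop br \<rho> \<mu> x y (\<rho> z v) - \<rho> z (Dop br \<rho> \<mu> x y v)"
    and \<mu>_tr_right: "\<mu> z w (\<mu> x y v) - \<mu> y w (\<mu> x z v) - \<mu> x (tr y z w) v
                       + Dop br \<rho> \<mu> y z (\<mu> x w v) = 0"
    and \<mu>_tr_left: "\<mu> (tr x y z) w v + \<mu> z (tr x y w) v
                       = Dop br \<rho> \<mu> x y (\<mu> z w v) - \<mu> z w (Dop br \<rho> \<mu> x y v)"
  using rep unfolding LY_rep_def by auto

lemma
  shows T_bracket: "br (T u) (T v) = T (\<rho> (T u) v - \<rho> (T v) u)"
    and T_tr: "tr (T u) (T v) (T w) = T (Dop br \<rho> \<mu> (T u) (T v) w + \<mu> (T v) (T w) u - \<mu> (T u) (T w) v)"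
  using RB unfolding rel_RB_def by auto

definition mult :: "'v \<Rightarrow> 'v \<Rightarrow> 'v" where
  "mult u v = \<rho> (T u) v"

definition trip :: "'v \<Rightarrow> 'v \<Rightarrow> 'v \<Rightarrow> 'v" where
  "trip u v w = \<mu> (T v) (T w) u"

lemma bilin_mult: "bilin sv sv sv mult"
  unfolding bilin_def mult_def using linear_\<rho> linear_compose_apply[OF linear_T linear_\<rho>_left] by blast

lemma trilin_trip: "trilin sv sv sv sv trip"
  unfolding trilin_def trip_def
  using linear_\<mu> linear_compose_apply[OF linear_T linear_\<mu>_left]
    linear_compose_apply[OF linear_T linear_\<mu>_middle]
  by blast

lemma T_mult_commutator: "T (mult u v - mult v u) = br (T u) (T v)"
  by (simp add: mult_def T_bracket)

lemma preLY_D_eq_Dop: "preLY_D mult trip u v w = Dop br \<rho> \<mu> (T u) (T v) w"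
proof -
  have "\<rho> (br (T u) (T v)) w = \<rho> (T (\<rho> (T u) v)) w - \<rho> (T (\<rho> (T v) u)) w"
    by (simp add: T_bracket linear_map_diff[OF linear_T] linear_map_diff[OF linear_\<rho>_left])
  then show ?thesis
    by (simp add: preLY_D_def associator_def trip_def mult_def Dop_def algebra_simps)
qed

lemma T_preLY_D: "T (preLY_D mult trip u v w + trip u v w - trip v u w) = tr (T u) (T v) (T w)"
  by (simp add: T_tr preLY_D_eq_Dop trip_def)

lemma trip_middle_commutator: "trip z (mult x y - mult y x) w - trip (mult y z) x w + trip (mult x z) y w = 0"
  unfolding trip_def T_mult_commutator by (simp add: mult_def \<mu>_bracket_left)

lemma trip_right_commutator: "trip x y (mult z w - mult w z) = mult z (trip x y w) - mult w (trip x y z)"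
  using \<mu>_bracket_right unfolding trip_def T_mult_commutator by (simp add: mult_def algebra_simps)

lemma \<mu>_tr_expand_left:
  "\<mu> (tr (T x) (T y) (T w)) (T t) z
     = trip z (preLY_D mult trip x y w) t + trip z (trip x y w) t - trip z (trip y x w) t"
  unfolding T_preLY_D[symmetric]
  by (simp add: trip_def linear_map_diff[OF linear_T] linear_map_add[OF linear_T]
      linear_map_diff[OF linear_\<mu>_left] linear_map_add[OF linear_\<mu>_left])

lemma \<mu>_tr_expand_middle:
  "\<mu> (T y) (tr (T z) (T w) (T t)) x
     = trip x y (preLY_D mult trip z w t) + trip x y (trip z w t) - trip x y (trip w z t)"
  unfolding T_preLY_D[symmetric]
  by (simp add: trip_def linear_map_diff[OF linear_T] linear_map_add[OF linear_T]
      linear_map_diff[OF linear_\<mu>_middle] linear_map_add[OF linear_\<mu>_middle])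

lemma \<rho>_tr_expand:
  "\<rho> (tr (T x) (T y) (T z)) w
     = mult (preLY_D mult trip x y z) w + mult (trip x y z) w - mult (trip y x z) w"
  unfolding T_preLY_D[symmetric]
  by (simp add: mult_def linear_map_diff[OF linear_T] linear_map_add[OF linear_T]
      linear_map_diff[OF linear_\<rho>_left] linear_map_add[OF linear_\<rho>_left])

lemma trip_right_trip:
  "trip (trip x y z) w t - trip (trip x y w) z t - trip x y (preLY_D mult trip z w t)
   - trip x y (trip z w t) + trip x y (trip w z t) + preLY_D mult trip z w (trip x y t) = 0"
proof -
  have "preLY_D mult trip z w (trip x y t)
      = \<mu> (T y) (tr (T z) (T w) (T t)) x + trip (trip x y w) z t - trip (trip x y z) w t"
    using \<mu>_tr_right[of "T w" "T t" "T y" "T z" x]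
    by (simp add: preLY_D_eq_Dop trip_def algebra_simps eq_diff_eq)
  then show ?thesis
    by (simp add: \<mu>_tr_expand_middle algebra_simps)
qed

lemma preLY_D_derivation_trip:
  "trip z (preLY_D mult trip x y w) t + trip z (trip x y w) t - trip z (trip y x w) t
   + trip z w (preLY_D mult trip x y t) + trip z w (trip x y t) - trip z w (trip y x t)
   = preLY_D mult trip x y (trip z w t) - trip (preLY_D mult trip x y z) w t"
proof -
  have "preLY_D mult trip x y (trip z w t) - trip (preLY_D mult trip x y z) w t
      = \<mu> (tr (T x) (T y) (T w)) (T t) z + \<mu> (T w) (tr (T x) (T y) (T t)) z"
    using \<mu>_tr_left[of "T x" "T y" "T w" "T t" z] by (simp add: preLY_D_eq_Dop trip_def)
  then show ?thesis
    by (simp add: \<mu>_tr_expand_left \<mu>_tr_expand_middle algebra_simps)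
qed

lemma preLY_D_derivation_mult:
  "mult (preLY_D mult trip x y z) w + mult (trip x y z) w - mult (trip y x z) w
   = preLY_D mult trip x y (mult z w) - mult z (preLY_D mult trip x y w)"
  unfolding \<rho>_tr_expand[symmetric] by (simp add: \<rho>_tr preLY_D_eq_Dop mult_def)

lemma preLY_mult_trip: "preLY sv mult trip"
  using vector_space_V bilin_mult trilin_trip trip_middle_commutator trip_right_commutator
    trip_right_trip preLY_D_derivation_trip preLY_D_derivation_mult
  unfolding preLY_def Let_def associator_def[symmetric] preLY_D_def[symmetric]
  by blast

end

theorem theorem3p13:
  fixes s :: "'k::field_char_0 \<Rightarrow> 'g::ab_group_add \<Rightarrow> 'g"
    and sv :: "'k \<Rightarrow> 'v::ab_group_add \<Rightarrow> 'v"
    and br :: "'g \<Rightarrow> 'g \<Rightarrow> 'g" and tr :: "'g \<Rightarrow> 'g \<Rightarrow> 'g \<Rightarrow> 'g"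
    and \<rho> :: "'g \<Rightarrow> 'v \<Rightarrow> 'v" and \<mu> :: "'g \<Rightarrow> 'g \<Rightarrow> 'v \<Rightarrow> 'v" and T :: "'v \<Rightarrow> 'g"
  assumes "LieYamaguti s br tr"
    and "LY_rep s br tr sv \<rho> \<mu>"
    and "rel_RB s br tr sv \<rho> \<mu> T"
  shows "preLY sv (\<lambda>u v. \<rho> (T u) v) (\<lambda>u v w. \<mu> (T v) (T w) u)"
proof -
  interpret LY_relative_RB s br tr sv \<rho> \<mu> T
    using assms(2,3) by unfold_locales
  have "mult = (\<lambda>u v. \<rho> (T u) v)" and "trip = (\<lambda>u v w. \<mu> (T v) (T w) u)"
    by (simp_all add: fun_eq_iff mult_def trip_def)
  with preLY_mult_trip show ?thesis by simp
qed

end
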